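(* Let $m,n$ be integers with $mn\neq0$ and let $K=J(2m,2n)$, with knot group $\pi_1(K)=\langle a,b\mid w^na=bw^n\rangle$, where $a,b$ are meridians and $w=(ba^{-1})^m(b^{-1}a)^m$. Let $s\neq0$ and $y\neq 2$ be complex numbers such that $\rho(a)=\begin{bmatrix}s&1\\0&s^{-1}\end{bmatrix}$, $\rho(b)=\begin{bmatrix}s&0\\2-y&s^{-1}\end{bmatrix}$ defines a representation $\rho:\pi_1(K)\to SL_2(\mathbb C)$ (equivalently $s,y$ satisfy the Riley equation $\phi_K(s,y)=0$). Let $\lambda=\overleftarrow{w}^nw^n$ be the canonical longitude corresponding to the meridian $a$, where $\overleftarrow{w}$ is the word $w$ written in reverse order. Then $$\operatorname{tr}\rho(\lambda)=2-\frac{(s+s^{-1})^2(y-2)^2S_{m-1}^2(y)}{2-s^2-s^{-2}+(y-s^2-s^{-2})(y-2)S_{m-1}^2(y)}.$$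
   Context: $S_k(v)$ denotes the Chebyshev polynomials of the second kind, defined for all integers $k$ by $S_0(v)=1$, $S_1(v)=v$, $S_k(v)=vS_{k-1}(v)-S_{k-2}(v)$. Explicitly, the Riley polynomial is $\phi_K(s,y)=S_n(z)-\big\{1+(y-s^2-s^{-2})S_{m-1}(y)(S_m(y)-S_{m-1}(y))\big\}S_{n-1}(z)$ with $z=2+(y-2)(y-s^2-s^{-2})S_{m-1}^2(y)=\operatorname{tr}\rho(w)$. *)

theory Defs
  imports "HOL-Analysis.Analysis"
begin

type_synonym cmat = "complex^2^2"

text \<open>Chebyshev polynomials of the second kind, S_0 = 1, S_1 = v,
  S_k = v S_(k-1) - S_(k-2), extended to all integers k via the same recurrence.\<close>
fun chebS_nat :: "nat \<Rightarrow> complex \<Rightarrow> complex" where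
  "chebS_nat 0 v = 1"
| "chebS_nat (Suc 0) v = v"
| "chebS_nat (Suc (Suc k)) v = v * chebS_nat (Suc k) v - chebS_nat k v"

definition chebS :: "int \<Rightarrow> complex \<Rightarrow> complex" where
  "chebS k v = (if 0 \<le> k then chebS_nat (nat k) v
                else if k = -1 then 0 else - chebS_nat (nat (-k - 2)) v)"

fun mpow :: "cmat \<Rightarrow> nat \<Rightarrow> cmat" where
  "mpow M 0 = mat 1"
| "mpow M (Suc k) = M ** mpow M k"

definition zpow :: "cmat \<Rightarrow> int \<Rightarrow> cmat" where
  "zpow M k = (if 0 \<le> k then mpow M (nat k) else mpow (matrix_inv M) (nat (-k)))"

definition rhoA :: "complex \<Rightarrow> cmat" where
  "rhoA s = vector [vector [s, 1], vector [0, inverse s]]"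

definition rhoB :: "complex \<Rightarrow> complex \<Rightarrow> cmat" where
  "rhoB s y = vector [vector [s, 0], vector [2 - y, inverse s]]"

definition rhoW :: "int \<Rightarrow> complex \<Rightarrow> complex \<Rightarrow> cmat" where
  "rhoW m s y = zpow (rhoB s y ** matrix_inv (rhoA s)) m
               ** zpow (matrix_inv (rhoB s y) ** rhoA s) m"

definition rhoWrev :: "int \<Rightarrow> complex \<Rightarrow> complex \<Rightarrow> cmat" where
  "rhoWrev m s y = zpow (rhoA s ** matrix_inv (rhoB s y)) m
                  ** zpow (matrix_inv (rhoA s) ** rhoB s y) m"

definition rhoLambda :: "int \<Rightarrow> int \<Rightarrow> complex \<Rightarrow> complex \<Rightarrow> cmat" where
  "rhoLambda m n s y = zpow (rhoWrev m s y) n ** zpow (rhoW m s y) n"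

end

theory Submission
  imports Defs
begin

text \<open>
  Every M in SL(2,C) satisfies M^k = S_(k-1)(tr M) M - S_(k-2)(tr M) I for all integers k
  (Cayley-Hamilton). Applied with k = m to rho(b a^-1) and rho(b^-1 a), both of trace y, this
  writes W = rho(w) and W' = rho(w reversed) polynomially in S_(m-1)(y) and S_(m-2)(y); both
  have trace z. Applied with k = n to W and W' it gives
  tr rho(lambda) = alpha^2 tr(W' W) - 2 alpha beta z + 2 beta^2 with alpha = S_(n-1)(z),
  beta = S_(n-2)(z). The (1,2) entry of the relation W^n rho(a) = rho(b) W^n gives
  beta = alpha e for an explicit e, and the Cassini identity alpha^2 - z alpha beta + beta^2 = 1
  then forces alpha^2 (1 - z e + e^2) = 1, which turns the trace into the claimed rational
  function of s and y.
\<close>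

subsection \<open>2x2 matrices in coordinates\<close>

definition mat2 :: "complex \<Rightarrow> complex \<Rightarrow> complex \<Rightarrow> complex \<Rightarrow> cmat" where
  "mat2 a b c d = vector [vector [a, b], vector [c, d]]"

lemma mat2_nth [simp]:
  "mat2 a b c d $ 1 $ 1 = a" "mat2 a b c d $ 1 $ 2 = b"
  "mat2 a b c d $ 2 $ 1 = c" "mat2 a b c d $ 2 $ 2 = d"
  by (simp_all add: mat2_def)

lemma mat2_cases: obtains a b c d where "M = mat2 a b c d"
proof
  show "M = mat2 (M$1$1) (M$1$2) (M$2$1) (M$2$2)"
    by (simp add: vec_eq_iff forall_2)
qed

lemma mat2_eq_iff:
  "mat2 a b c d = mat2 a' b' c' d' \<longleftrightarrow> a = a' \<and> b = b' \<and> c = c' \<and> d = d'"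
  by (metis mat2_nth)

lemma mat2_mult:
  "mat2 a b c d ** mat2 a' b' c' d' =
     mat2 (a * a' + b * c') (a * b' + b * d') (c * a' + d * c') (c * b' + d * d')"
  by (simp add: vec_eq_iff forall_2 matrix_matrix_mult_def sum_2)

lemma mat_one_eq_mat2: "mat 1 = mat2 1 0 0 1"
  by (simp add: vec_eq_iff forall_2 mat_def)

lemma trace_mat2: "trace (mat2 a b c d) = a + d"
  by (simp add: trace_def sum_2)

lemma det_mat2: "det (mat2 a b c d) = a * d - b * c"
  by (simp add: det_2)

lemma matrix_inv_mat2:
  assumes "a * d - b * c = 1"
  shows "matrix_inv (mat2 a b c d) = mat2 d (-b) (-c) a"
proof -
  let ?M = "mat2 a b c d" and ?N = "mat2 d (-b) (-c) a"
  have inverse: "?M ** ?N = mat 1" "?N ** ?M = mat 1"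
    using assms by (simp_all add: mat2_mult mat_one_eq_mat2 mat2_eq_iff algebra_simps)
  then have inv: "?M ** matrix_inv ?M = mat 1 \<and> matrix_inv ?M ** ?M = mat 1"
    unfolding matrix_inv_def by (intro someI_ex[where P = "\<lambda>N. ?M ** N = mat 1 \<and> N ** ?M = mat 1"]) blast
  have "matrix_inv ?M = matrix_inv ?M ** (?M ** ?N)"
    using inverse by (simp add: matrix_mul_rid)
  also have "\<dots> = (matrix_inv ?M ** ?M) ** ?N"
    by (simp add: matrix_mul_assoc)
  finally show ?thesis
    using inv by (simp add: matrix_mul_lid)
qed

subsection \<open>Chebyshev polynomials of the second kind\<close>

lemma chebS_rec: "chebS (k + 1) v = v * chebS k v - chebS (k - 1) v"
proof -
  consider "k \<ge> 1" | "-2 \<le> k \<and> k \<le> 0" | "k \<le> -3" by linarith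
  then show ?thesis
  proof cases
    case 1
    then have "nat (k + 1) = Suc (Suc (nat (k - 1)))" "nat k = Suc (nat (k - 1))" by auto
    with 1 show ?thesis by (simp add: chebS_def)
  next
    case 2
    then have "k = 0 \<or> k = -1 \<or> k = -2" by linarith
    then show ?thesis by (auto simp: chebS_def)
  next
    case 3
    then obtain j where j: "k = - int j - 3" by (intro that[of "nat (- k - 3)"]) simp
    then have "nat (- (k + 1) - 2) = j" "nat (- k - 2) = Suc j" "nat (- (k - 1) - 2) = Suc (Suc j)"
      by auto
    with 3 show ?thesis by (simp add: chebS_def)
  qed
qed

lemma chebS_rec': "chebS k v = v * chebS (k - 1) v - chebS (k - 2) v"
  using chebS_rec[of "k - 1" v] by simp

lemma chebS_uminus: "chebS (- k) v = - chebS (k - 2) v"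
  by (cases "k \<ge> 2 \<or> k \<le> -1") (auto simp: chebS_def)

lemma chebS_cassini: "(chebS k v)\<^sup>2 - v * chebS k v * chebS (k - 1) v + (chebS (k - 1) v)\<^sup>2 = 1"
proof (induction k rule: int_induct[where k = 0])
  case base
  then show ?case by (simp add: chebS_def)
next
  case (step1 k)
  have "chebS (k + 1) v = v * chebS k v - chebS (k - 1) v" by (rule chebS_rec)
  with step1.IH show ?case by simp algebra
next
  case (step2 k)
  have "chebS k v = v * chebS (k - 1) v - chebS (k - 2) v" by (rule chebS_rec')
  with step2.IH show ?case by simp algebra
qed

subsection \<open>Powers of SL(2) matrices\<close>

definition lincomb_id :: "complex \<Rightarrow> complex \<Rightarrow> cmat \<Rightarrow> cmat" where
  "lincomb_id a b M = (\<chi> i j. a * M $ i $ j - b * mat 1 $ i $ j)"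

lemma lincomb_id_mat2:
  "lincomb_id a b (mat2 p q r w) = mat2 (a * p - b) (a * q) (a * r) (a * w - b)"
  by (simp add: lincomb_id_def vec_eq_iff forall_2 mat_def)

lemma mult_lincomb_id:
  assumes "det M = 1"
  shows "M ** lincomb_id a b M = lincomb_id (trace M * a - b) a M"
proof -
  obtain p q r w where M: "M = mat2 p q r w" by (rule mat2_cases)
  show ?thesis
    using assms unfolding M det_mat2 trace_mat2 lincomb_id_mat2 mat2_mult mat2_eq_iff
    by algebra
qed

lemma mpow_eq_chebS:
  assumes "det M = 1"
  shows "mpow M k = lincomb_id (chebS (int k - 1) (trace M)) (chebS (int k - 2) (trace M)) M"
proof (induction k)
  case 0
  obtain p q r w where "M = mat2 p q r w" by (rule mat2_cases)
  then show ?case by (simp add: lincomb_id_mat2 mat_one_eq_mat2 chebS_def)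
next
  case (Suc k)
  then show ?case
    using chebS_rec'[of "int k" "trace M"] by (simp add: mult_lincomb_id[OF assms])
qed

lemma zpow_eq_chebS:
  assumes "det M = 1"
  shows "zpow M k = lincomb_id (chebS (k - 1) (trace M)) (chebS (k - 2) (trace M)) M"
proof (cases "0 \<le> k")
  case True
  then show ?thesis by (simp add: zpow_def mpow_eq_chebS[OF assms])
next
  case False
  obtain p q r w where M: "M = mat2 p q r w" by (rule mat2_cases)
  have det: "p * w - q * r = 1" using assms by (simp add: M det_mat2)
  have inv: "matrix_inv (mat2 p q r w) = mat2 w (-q) (-r) p" by (rule matrix_inv_mat2[OF det])
  have "det (matrix_inv M) = 1" using det by (simp add: M inv det_mat2 algebra_simps)
  then have "zpow M k = lincomb_id (chebS (- k - 1) (p + w)) (chebS (- k - 2) (p + w)) (matrix_inv M)"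
    using False mpow_eq_chebS[of "matrix_inv M" "nat (- k)"]
    by (simp add: zpow_def M inv trace_mat2 add.commute)
  moreover have "chebS (k - 1) v = - chebS (- k - 1) v" "chebS (k - 2) v = - chebS (- k) v" for v
    using chebS_uminus[of "1 - k" v] chebS_uminus[of "2 - k" v]
    by (simp_all add: minus_diff_eq diff_diff_eq[symmetric]) (smt (verit))
  ultimately show ?thesis
    using chebS_rec'[of "- k" "p + w"]
    by (simp add: M inv trace_mat2 lincomb_id_mat2 mat2_eq_iff algebra_simps)
qed

lemma det_lincomb_id:
  assumes "det M = 1"
  shows "det (lincomb_id a b M) = a\<^sup>2 - a * b * trace M + b\<^sup>2"
proof -
  obtain p q r w where M: "M = mat2 p q r w" by (rule mat2_cases)
  show ?thesis using assms unfolding M lincomb_id_mat2 det_mat2 trace_mat2 by algebra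
qed

lemma det_zpow:
  assumes "det M = 1"
  shows "det (zpow M k) = 1"
  using chebS_cassini[of "k - 1" "trace M"]
  by (simp add: zpow_eq_chebS[OF assms] det_lincomb_id[OF assms] ac_simps)

lemma trace_lincomb_id_mult:
  "trace (lincomb_id a b N ** lincomb_id a b M) =
     a\<^sup>2 * trace (N ** M) - a * b * (trace N + trace M) + 2 * b\<^sup>2"
proof -
  obtain p q r w where M: "M = mat2 p q r w" by (rule mat2_cases)
  obtain p' q' r' w' where N: "N = mat2 p' q' r' w'" by (rule mat2_cases)
  show ?thesis
    unfolding M N lincomb_id_mat2 mat2_mult trace_mat2 by (simp add: algebra_simps power2_eq_square)
qed

subsection \<open>The two-bridge knot J(2m,2n)\<close>

lemma rho_generators_mat2:
  "rhoA s = mat2 s 1 0 (inverse s)" "rhoB s y = mat2 s 0 (2 - y) (inverse s)"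
  by (simp_all add: rhoA_def rhoB_def mat2_def)

lemma rho_generator_products:
  assumes "s \<noteq> 0"
  shows "rhoB s y ** matrix_inv (rhoA s) = mat2 1 (-s) ((2 - y) * inverse s) (y - 1)"
    and "matrix_inv (rhoB s y) ** rhoA s = mat2 1 (inverse s) ((y - 2) * s) (y - 1)"
    and "rhoA s ** matrix_inv (rhoB s y) = mat2 (y - 1) s ((y - 2) * inverse s) 1"
    and "matrix_inv (rhoA s) ** rhoB s y = mat2 (y - 1) (- inverse s) ((2 - y) * s) 1"
  using assms matrix_inv_mat2[of s "inverse s" 1 0] matrix_inv_mat2[of s "inverse s" 0 "2 - y"]
  by (simp_all add: rho_generators_mat2 mat2_mult mat2_eq_iff algebra_simps)

lemma
  assumes "s \<noteq> 0"
  shows det_rho_generator_products: "det (mat2 1 (-s) ((2 - y) * inverse s) (y - 1)) = 1"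
      "det (mat2 1 (inverse s) ((y - 2) * s) (y - 1)) = 1"
      "det (mat2 (y - 1) s ((y - 2) * inverse s) 1) = 1"
      "det (mat2 (y - 1) (- inverse s) ((2 - y) * s) 1) = 1"
    and trace_rho_generator_products: "trace (mat2 1 (-s) ((2 - y) * inverse s) (y - 1)) = y"
      "trace (mat2 1 (inverse s) ((y - 2) * s) (y - 1)) = y"
      "trace (mat2 (y - 1) s ((y - 2) * inverse s) 1) = y"
      "trace (mat2 (y - 1) (- inverse s) ((2 - y) * s) 1) = y"
  using assms by (simp_all add: det_mat2 trace_mat2 field_simps)

lemma rhoW_eq_lincomb_id:
  assumes "s \<noteq> 0"
  shows "rhoW m s y =
    lincomb_id (chebS (m - 1) y) (chebS (m - 2) y) (mat2 1 (-s) ((2 - y) * inverse s) (y - 1)) **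
    lincomb_id (chebS (m - 1) y) (chebS (m - 2) y) (mat2 1 (inverse s) ((y - 2) * s) (y - 1))"
  using assms
  by (simp add: rhoW_def rho_generator_products zpow_eq_chebS det_rho_generator_products
      trace_rho_generator_products)

lemma rhoWrev_eq_lincomb_id:
  assumes "s \<noteq> 0"
  shows "rhoWrev m s y =
    lincomb_id (chebS (m - 1) y) (chebS (m - 2) y) (mat2 (y - 1) s ((y - 2) * inverse s) 1) **
    lincomb_id (chebS (m - 1) y) (chebS (m - 2) y) (mat2 (y - 1) (- inverse s) ((2 - y) * s) 1)"
  using assms
  by (simp add: rhoWrev_def rho_generator_products zpow_eq_chebS det_rho_generator_products
      trace_rho_generator_products)

lemma det_rhoW: "s \<noteq> 0 \<Longrightarrow> det (rhoW m s y) = 1"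
  and det_rhoWrev: "s \<noteq> 0 \<Longrightarrow> det (rhoWrev m s y) = 1"
  by (simp_all add: rhoW_def rhoWrev_def det_mul rho_generator_products det_zpow
      det_rho_generator_products)

lemma
  fixes s t y S R :: complex
  assumes st: "s * t = 1" and cassini: "S\<^sup>2 - y * S * R + R\<^sup>2 = 1"
  defines "W \<equiv> lincomb_id S R (mat2 1 (-s) ((2 - y) * t) (y - 1)) **
                lincomb_id S R (mat2 1 t ((y - 2) * s) (y - 1))"
    and "W' \<equiv> lincomb_id S R (mat2 (y - 1) s ((y - 2) * t) 1) **
               lincomb_id S R (mat2 (y - 1) (- t) ((2 - y) * s) 1)"
  shows trace_rhoW_poly: "trace W = 2 + (y - 2) * (y - s\<^sup>2 - t\<^sup>2) * S\<^sup>2"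
    and trace_rhoWrev_poly: "trace W' = trace W"
    and rhoW_entries_poly: "W $ 1 $ 1 + W $ 1 $ 2 * (t - s) = 1 + (s\<^sup>2 + t\<^sup>2 - y) * S * (S - R)"
    and trace_rhoWrev_rhoW_poly:
      "trace (W' ** W) = 2 - (s + t)\<^sup>2 * (y - 2)\<^sup>2 * (y - s\<^sup>2 - t\<^sup>2) * S ^ 4"
proof -
  note defs = W_def W'_def lincomb_id_mat2 mat2_mult trace_mat2 mat2_nth
  show "trace W = 2 + (y - 2) * (y - s\<^sup>2 - t\<^sup>2) * S\<^sup>2"
    unfolding defs using st cassini by algebra
  show "trace W' = trace W"
    unfolding defs by algebra
  show "W $ 1 $ 1 + W $ 1 $ 2 * (t - s) = 1 + (s\<^sup>2 + t\<^sup>2 - y) * S * (S - R)"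
    unfolding defs using st cassini by algebra
  show "trace (W' ** W) = 2 - (s + t)\<^sup>2 * (y - 2)\<^sup>2 * (y - s\<^sup>2 - t\<^sup>2) * S ^ 4"
    unfolding defs using st cassini by algebra
qed

lemma riley_relation_chebS:
  assumes "det W = 1" and "zpow W n ** rhoA s = rhoB s y ** zpow W n"
  shows "chebS (n - 2) (trace W) =
           chebS (n - 1) (trace W) * (W $ 1 $ 2 * (inverse s - s) + W $ 1 $ 1)"
proof -
  obtain p q r w where W: "W = mat2 p q r w" by (rule mat2_cases)
  have "(zpow W n ** rhoA s) $ 1 $ 2 = (rhoB s y ** zpow W n) $ 1 $ 2"
    using assms(2) by simp
  then show ?thesis
    unfolding zpow_eq_chebS[OF assms(1)]
    by (simp add: W rho_generators_mat2 lincomb_id_mat2 mat2_mult trace_mat2 algebra_simps)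
qed

lemma trace_zpow_mult_zpow:
  assumes "det M = 1" "det N = 1" "trace N = trace M"
  shows "trace (zpow N n ** zpow M n) =
    (chebS (n - 1) (trace M))\<^sup>2 * trace (N ** M)
      - 2 * chebS (n - 1) (trace M) * chebS (n - 2) (trace M) * trace M
      + 2 * (chebS (n - 2) (trace M))\<^sup>2"
  using assms by (simp add: zpow_eq_chebS trace_lincomb_id_mult)

lemma
  assumes "s \<noteq> 0"
  shows trace_rhoW:
      "trace (rhoW m s y) = 2 + (y - 2) * (y - s\<^sup>2 - (inverse s)\<^sup>2) * (chebS (m - 1) y)\<^sup>2"
    and trace_rhoWrev: "trace (rhoWrev m s y) = trace (rhoW m s y)"
    and rhoW_entries: "rhoW m s y $ 1 $ 2 * (inverse s - s) + rhoW m s y $ 1 $ 1 =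
      1 + (s\<^sup>2 + (inverse s)\<^sup>2 - y) * chebS (m - 1) y * (chebS (m - 1) y - chebS (m - 2) y)"
    and trace_rhoWrev_rhoW: "trace (rhoWrev m s y ** rhoW m s y) =
      2 - (s + inverse s)\<^sup>2 * (y - 2)\<^sup>2 * (y - s\<^sup>2 - (inverse s)\<^sup>2) * (chebS (m - 1) y) ^ 4"
proof -
  have st: "s * inverse s = 1" using assms by simp
  note cassini = chebS_cassini[of "m - 1" y, simplified]
  note W = rhoW_eq_lincomb_id[OF assms] and W' = rhoWrev_eq_lincomb_id[OF assms]
  show "trace (rhoW m s y) = 2 + (y - 2) * (y - s\<^sup>2 - (inverse s)\<^sup>2) * (chebS (m - 1) y)\<^sup>2"
    unfolding W by (rule trace_rhoW_poly[OF st cassini])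
  show "trace (rhoWrev m s y) = trace (rhoW m s y)"
    unfolding W W' by (rule trace_rhoWrev_poly[OF st cassini])
  show "rhoW m s y $ 1 $ 2 * (inverse s - s) + rhoW m s y $ 1 $ 1 =
      1 + (s\<^sup>2 + (inverse s)\<^sup>2 - y) * chebS (m - 1) y * (chebS (m - 1) y - chebS (m - 2) y)"
    using rhoW_entries_poly[OF st cassini] unfolding W by (simp add: algebra_simps)
  show "trace (rhoWrev m s y ** rhoW m s y) =
      2 - (s + inverse s)\<^sup>2 * (y - 2)\<^sup>2 * (y - s\<^sup>2 - (inverse s)\<^sup>2) * (chebS (m - 1) y) ^ 4"
    unfolding W W' by (rule trace_rhoWrev_rhoW_poly[OF st cassini])
qed

lemma trace_eq_of_cassini:
  fixes \<alpha> \<beta> z e K N D :: complex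
  assumes "\<alpha>\<^sup>2 - z * \<alpha> * \<beta> + \<beta>\<^sup>2 = 1" and "\<beta> = \<alpha> * e" and "1 - z * e + e\<^sup>2 = K * D"
  shows "\<alpha>\<^sup>2 * (2 - K * N) - 2 * \<alpha> * \<beta> * z + 2 * \<beta>\<^sup>2 = 2 - N / D"
proof -
  have inverse_D: "(\<alpha>\<^sup>2 * K) * D = 1"
    using assms by algebra
  then have "D \<noteq> 0" by auto
  have "\<alpha>\<^sup>2 * (2 - K * N) - 2 * \<alpha> * \<beta> * z + 2 * \<beta>\<^sup>2 = 2 - (\<alpha>\<^sup>2 * K) * N"
    using assms by algebra
  also have "(\<alpha>\<^sup>2 * K) * N = N / D"
    using inverse_D \<open>D \<noteq> 0\<close> by (simp add: eq_divide_eq ac_simps)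
  finally show ?thesis .
qed

theorem proposition2p7:
  fixes m n :: int and s y :: complex
  assumes "m * n \<noteq> 0"
    and "s \<noteq> 0" and "y \<noteq> 2"
    and rep: "zpow (rhoW m s y) n ** rhoA s = rhoB s y ** zpow (rhoW m s y) n"
  shows "trace (rhoLambda m n s y) =
     2 - (s + inverse s)^2 * (y - 2)^2 * (chebS (m - 1) y)^2 /
         (2 - s^2 - inverse (s^2) + (y - s^2 - inverse (s^2)) * (y - 2) * (chebS (m - 1) y)^2)"
proof -
  define S R where "S = chebS (m - 1) y" and "R = chebS (m - 2) y"
  define u where "u = s\<^sup>2 + (inverse s)\<^sup>2"
  define z \<alpha> \<beta> where "z = trace (rhoW m s y)"
    and "\<alpha> = chebS (n - 1) z" and "\<beta> = chebS (n - 2) z"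
  define e where "e = 1 + (u - y) * S * (S - R)"
  have cassini_m: "S\<^sup>2 - y * S * R + R\<^sup>2 = 1"
    using chebS_cassini[of "m - 1" y] by (simp add: S_def R_def)
  have cassini_n: "\<alpha>\<^sup>2 - z * \<alpha> * \<beta> + \<beta>\<^sup>2 = 1"
    using chebS_cassini[of "n - 1" z] by (simp add: \<alpha>_def \<beta>_def)
  have z: "z = 2 + (y - 2) * (y - u) * S\<^sup>2"
    using trace_rhoW[OF \<open>s \<noteq> 0\<close>] by (simp add: z_def u_def S_def algebra_simps)
  have \<beta>: "\<beta> = \<alpha> * e"
    using riley_relation_chebS[OF det_rhoW[OF \<open>s \<noteq> 0\<close>] rep] rhoW_entries[OF \<open>s \<noteq> 0\<close>]
    by (simp add: \<alpha>_def \<beta>_def z_def u_def e_def S_def R_def)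
  define K D N where "K = (y - u) * S\<^sup>2" and "D = 2 - u + (y - u) * (y - 2) * S\<^sup>2"
    and "N = (s + inverse s)\<^sup>2 * (y - 2)\<^sup>2 * S\<^sup>2"
  have "trace (rhoLambda m n s y) =
          \<alpha>\<^sup>2 * trace (rhoWrev m s y ** rhoW m s y) - 2 * \<alpha> * \<beta> * z + 2 * \<beta>\<^sup>2"
    using \<open>s \<noteq> 0\<close> by (simp add: rhoLambda_def trace_zpow_mult_zpow det_rhoW det_rhoWrev
        trace_rhoWrev z_def \<alpha>_def \<beta>_def)
  also have "trace (rhoWrev m s y ** rhoW m s y) = 2 - K * N"
    unfolding trace_rhoWrev_rhoW[OF \<open>s \<noteq> 0\<close>] K_def N_def u_def S_def by algebra
  also have "\<alpha>\<^sup>2 * (2 - K * N) - 2 * \<alpha> * \<beta> * z + 2 * \<beta>\<^sup>2 = 2 - N / D"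
  proof (rule trace_eq_of_cassini[OF cassini_n \<beta>])
    show "1 - z * e + e\<^sup>2 = K * D"
      using cassini_m unfolding z e_def K_def D_def by algebra
  qed
  also have "N / D = (s + inverse s)^2 * (y - 2)^2 * (chebS (m - 1) y)^2 /
         (2 - s^2 - inverse (s^2) + (y - s^2 - inverse (s^2)) * (y - 2) * (chebS (m - 1) y)^2)"
    by (simp add: N_def D_def u_def S_def power_inverse algebra_simps)
  finally show ?thesis .
qed

end
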